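(* Let $X=(X_n)_{n\in\mathbb{Z}}$ be a stationary sequence of integer-valued random variables. If almost surely $0$ has infinitely many ancestors in the record graph of $X$, then the record graph of $X$ is almost surely connected.
   Context: For a sequence $x=(x_n)_{n\in\mathbb{Z}}$, the record map is $R_x(i)=\inf\{n>i: \sum_{l=i}^{n-1}x_l\ge0\}$ if this set is nonempty, and $R_x(i)=i$ otherwise. The record graph has vertex set $\mathbb{Z}$ and a directed edge $i\to R_x(i)$ whenever $R_x(i)\ne i$; connectivity is in the undirected sense. An ancestor of order $n\ge1$ of $i$ is $R_x^n(i)$ when $R_x^n(i)\neq i$; "infinitely many ancestors" means $R^n_x(i)\ne i$ for all $n\ge1$ (equivalently $R^{n+1}_x(i)>R^n_x(i)$ for all $n\ge 0$). *)

theory Defs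
  imports "HOL-Probability.Probability"
begin

definition record_map :: "(int \<Rightarrow> int) \<Rightarrow> int \<Rightarrow> int" where
  "record_map x i =
     (if {n. n > i \<and> (\<Sum>l\<in>{i..<n}. x l) \<ge> 0} \<noteq> {}
      then (LEAST n. n > i \<and> (\<Sum>l\<in>{i..<n}. x l) \<ge> 0) else i)"

definition record_edges :: "(int \<Rightarrow> int) \<Rightarrow> (int \<times> int) set" where
  "record_edges x = {(i, record_map x i) | i. record_map x i \<noteq> i}"

definition record_graph_connected :: "(int \<Rightarrow> int) \<Rightarrow> bool" where
  "record_graph_connected x \<longleftrightarrow>
     (\<forall>i j. (i, j) \<in> (record_edges x \<union> (record_edges x)\<inverse>)\<^sup>*)"

definition inf_many_ancestors :: "(int \<Rightarrow> int) \<Rightarrow> int \<Rightarrow> bool" where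
  "inf_many_ancestors x i \<longleftrightarrow> (\<forall>n::nat. n \<ge> 1 \<longrightarrow> (record_map x ^^ n) i \<noteq> i)"

definition stationary_int_seq :: "'a measure \<Rightarrow> (int \<Rightarrow> 'a \<Rightarrow> int) \<Rightarrow> bool" where
  "stationary_int_seq M X \<longleftrightarrow>
     distr M (PiM UNIV (\<lambda>_. count_space UNIV)) (\<lambda>\<omega> n. X (n + 1) \<omega>)
   = distr M (PiM UNIV (\<lambda>_. count_space UNIV)) (\<lambda>\<omega> n. X n \<omega>)"

end

theory Submission
  imports Defs
begin

text \<open>
  Since \<open>R(0) \<noteq> 0\<close> almost surely, stationarity gives \<open>R(k) \<noteq> k\<close>, i.e. \<open>R(k) > k\<close>, almost
  surely for every \<open>k\<close> simultaneously. The rest is deterministic: records are nested, because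
  for \<open>i < j < R(i)\<close> the sum from \<open>i\<close> to \<open>j\<close> is negative, so the sum from \<open>j\<close> to \<open>R(i)\<close> is
  nonnegative and \<open>R(j) \<le> R(i)\<close>. Following the record map from \<open>i + 1\<close> therefore lands exactly
  on \<open>R(i)\<close>, which links \<open>i\<close> to \<open>i + 1\<close> in the record graph.
\<close>

definition has_record :: "(int \<Rightarrow> int) \<Rightarrow> int \<Rightarrow> bool" where
  "has_record x i \<longleftrightarrow> (\<exists>n>i. 0 \<le> (\<Sum>l\<in>{i..<n}. x l))"

lemma LeastI2_int_bounded_below:
  fixes P :: "int \<Rightarrow> bool"
  assumes "P n" and bounded: "\<And>m. P m \<Longrightarrow> b \<le> m"
    and "\<And>k. P k \<Longrightarrow> \<forall>m. P m \<longrightarrow> k \<le> m \<Longrightarrow> Q k"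
  shows "Q (LEAST m. P m)"
proof -
  define S where "S = {m. P m \<and> m \<le> n}"
  have "finite S" "n \<in> S"
    using assms(1) bounded by (auto simp: S_def intro: finite_subset[of _ "{b..n}"])
  then have "P (Min S)"
    using Min_in[of S] by (auto simp: S_def)
  moreover have "Min S \<le> m" if "P m" for m
  proof (cases "m \<le> n")
    case False
    then show ?thesis
      using Min_le[OF \<open>finite S\<close> \<open>n \<in> S\<close>] by simp
  qed (use Min_le[OF \<open>finite S\<close>] that in \<open>simp add: S_def\<close>)
  ultimately show ?thesis
    using assms(3) by (rule LeastI2_order)
qed

lemma sum_int_interval_split:
  fixes i j n :: int
  shows "i \<le> j \<Longrightarrow> j \<le> n \<Longrightarrow> sum x {i..<n} = sum x {i..<j} + sum x {j..<n}"
  by (simp add: sum.union_disjoint[symmetric] ivl_disj_un ivl_disj_int)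

lemma record_map_record:
  assumes "has_record x i"
  shows record_map_gt: "i < record_map x i"
    and record_map_sum_nonneg: "0 \<le> sum x {i..<record_map x i}"
    and record_map_least: "\<And>m. i < m \<Longrightarrow> m < record_map x i \<Longrightarrow> sum x {i..<m} < 0"
proof -
  let ?P = "\<lambda>n. i < n \<and> 0 \<le> sum x {i..<n}"
  have "record_map x i = (LEAST n. ?P n)"
    using assms unfolding record_map_def has_record_def by auto
  moreover obtain n where "?P n"
    using assms unfolding has_record_def by auto
  then have "?P (LEAST n. ?P n) \<and> (\<forall>m. ?P m \<longrightarrow> (LEAST n. ?P n) \<le> m)"
    by (rule LeastI2_int_bounded_below[where b = i]) auto
  ultimately show "i < record_map x i" "0 \<le> sum x {i..<record_map x i}"
    "\<And>m. i < m \<Longrightarrow> m < record_map x i \<Longrightarrow> sum x {i..<m} < 0"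
    by force+
qed

lemma record_map_eq_self_iff: "record_map x i = i \<longleftrightarrow> \<not> has_record x i"
proof (cases "has_record x i")
  case False
  then show ?thesis
    unfolding record_map_def has_record_def by auto
qed (use record_map_gt in force)

lemma record_map_nested:
  assumes "has_record x i" "i < j" "j < record_map x i"
  shows "has_record x j" and "record_map x j \<le> record_map x i"
proof -
  have "sum x {i..<record_map x i} = sum x {i..<j} + sum x {j..<record_map x i}"
    using assms(2,3) by (intro sum_int_interval_split) auto
  moreover have "sum x {i..<j} < 0"
    using record_map_least[OF assms] .
  ultimately have nonneg: "0 \<le> sum x {j..<record_map x i}"
    using record_map_sum_nonneg[OF assms(1)] by linarith
  then show j: "has_record x j"
    unfolding has_record_def using assms(3) by auto
  show "record_map x j \<le> record_map x i"
    using record_map_least[OF j, of "record_map x i"] nonneg assms(3) by force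
qed

lemma record_edge: "has_record x i \<Longrightarrow> (i, record_map x i) \<in> record_edges x"
  unfolding record_edges_def by (auto simp: record_map_eq_self_iff)

lemma record_edges_path_to_record_map:
  assumes all: "\<And>k. has_record x k" and "i < j" "j \<le> record_map x i"
  shows "(j, record_map x i) \<in> (record_edges x)\<^sup>*"
  using assms(2,3)
proof (induction "nat (record_map x i - j)" arbitrary: j rule: less_induct)
  case less
  show ?case
  proof (cases "j = record_map x i")
    case False
    then have "record_map x j \<le> record_map x i"
      using record_map_nested(2)[OF all] less.prems by force
    moreover have "j < record_map x j"
      using record_map_gt[OF all] .
    ultimately have "(record_map x j, record_map x i) \<in> (record_edges x)\<^sup>*"
      using less by auto
    with record_edge[OF all, of j] show ?thesis
      by (rule converse_rtrancl_into_rtrancl)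
  qed simp
qed

lemma record_graph_connectedI:
  assumes all: "\<And>k. has_record x k"
  shows "record_graph_connected x"
proof -
  define U where "U = (record_edges x \<union> (record_edges x)\<inverse>)\<^sup>*"
  have "sym U"
    unfolding U_def by (intro sym_rtrancl sym_Un_converse)
  have paths: "(record_edges x)\<^sup>* \<subseteq> U"
    unfolding U_def by (intro rtrancl_mono) auto
  have neighbours: "(i, i + 1) \<in> U" for i
  proof -
    have "(i, record_map x i) \<in> U"
      using record_edge[OF all] paths by blast
    moreover have "(i + 1, record_map x i) \<in> U"
      using record_edges_path_to_record_map[OF all, of i "i + 1"] record_map_gt[OF all, of i] paths
      by auto
    ultimately show ?thesis
      using \<open>sym U\<close> unfolding U_def by (meson rtrancl_trans symD)
  qed
  have upwards: "(i, j) \<in> U" if "i \<le> j" for i j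
    using that
  proof (induction j rule: int_ge_induct)
    case (step j)
    then show ?case
      using neighbours unfolding U_def by (meson rtrancl_trans)
  qed (simp add: U_def)
  show ?thesis
    unfolding record_graph_connected_def U_def[symmetric]
    using upwards \<open>sym U\<close> by (meson linear symD)
qed

lemma has_record_shift: "has_record (\<lambda>n. x (n + m)) k \<longleftrightarrow> has_record x (k + m)"
proof -
  have sums: "(\<Sum>l\<in>{k..<n}. x (l + m)) = sum x {k + m..<n + m}" for n
  proof -
    have "(\<lambda>l. l + m) ` {k..<n} = {k + m..<n + m}"
      by (auto simp: image_iff intro!: exI[of _ "_ - m"])
    then show ?thesis
      using sum.reindex[of "\<lambda>l. l + m" "{k..<n}" x] by (simp add: o_def)
  qed
  show ?thesis
    unfolding has_record_def sums
    by (metis add.commute add_less_cancel_left diff_add_cancel)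
qed

abbreviation int_seqs :: "(int \<Rightarrow> int) measure" where
  "int_seqs \<equiv> PiM UNIV (\<lambda>_. count_space UNIV)"

lemma measurable_sum_coordinates:
  "finite S \<Longrightarrow> (\<lambda>x. sum x S) \<in> int_seqs \<rightarrow>\<^sub>M count_space UNIV"
proof (induction S rule: finite_induct)
  case (insert a S)
  have "(\<lambda>x. (x a, sum x S)) \<in> int_seqs \<rightarrow>\<^sub>M count_space UNIV \<Otimes>\<^sub>M count_space UNIV"
    using insert.IH by (intro measurable_Pair) (auto simp: measurable_component_singleton)
  moreover have "(\<lambda>(u, v). u + v) \<in>
      (count_space UNIV \<Otimes>\<^sub>M count_space UNIV) \<rightarrow>\<^sub>M (count_space UNIV :: int measure)"
    by (simp add: pair_measure_countable)
  ultimately show ?case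
    using insert.hyps by (simp add: measurable_compose[where g = "\<lambda>(u, v). u + v"])
qed simp

lemma sets_has_record: "{x \<in> space int_seqs. has_record x k} \<in> sets int_seqs"
proof -
  have "{x \<in> space int_seqs. 0 \<le> sum x {k..<n}} \<in> sets int_seqs" for n
    using measurable_sum_coordinates[of "{k..<n}"] by measurable
  moreover have "{x \<in> space int_seqs. has_record x k}
      = (\<Union>n\<in>{k<..}. {x \<in> space int_seqs. 0 \<le> sum x {k..<n}})"
    unfolding has_record_def by auto
  ultimately show ?thesis
    by auto
qed

lemma measurable_shifted_seq:
  "(\<And>n. X n \<in> M \<rightarrow>\<^sub>M count_space UNIV) \<Longrightarrow> (\<lambda>\<omega> n. X (n + c) \<omega>) \<in> M \<rightarrow>\<^sub>M int_seqs"
  by (rule measurable_PiM_single') auto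

lemma measurable_shift: "(\<lambda>y n. y (n + c)) \<in> int_seqs \<rightarrow>\<^sub>M int_seqs"
  by (rule measurable_PiM_single') (auto simp: measurable_component_singleton)

lemma stationary_distr_shift:
  assumes meas: "\<And>n. X n \<in> M \<rightarrow>\<^sub>M count_space UNIV"
    and stat: "stationary_int_seq M X"
  shows "distr M int_seqs (\<lambda>\<omega> n. X (n + int m) \<omega>) = distr M int_seqs (\<lambda>\<omega> n. X n \<omega>)"
proof (induction m)
  case (Suc m)
  let ?shift = "\<lambda>y n. y (n + int m)"
  have "distr M int_seqs (\<lambda>\<omega> n. X (n + int (Suc m)) \<omega>)
      = distr M int_seqs (?shift \<circ> (\<lambda>\<omega> n. X (n + 1) \<omega>))"
    by (simp add: o_def add.commute add.left_commute)
  also have "\<dots> = distr (distr M int_seqs (\<lambda>\<omega> n. X (n + 1) \<omega>)) int_seqs ?shift"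
    by (rule distr_distr[symmetric]) (auto intro: measurable_shift measurable_shifted_seq meas)
  also have "\<dots> = distr (distr M int_seqs (\<lambda>\<omega> n. X n \<omega>)) int_seqs ?shift"
    using stat unfolding stationary_int_seq_def by simp
  also have "\<dots> = distr M int_seqs (?shift \<circ> (\<lambda>\<omega> n. X n \<omega>))"
    using measurable_shifted_seq[OF meas, where c = 0]
    by (intro distr_distr) (auto intro: measurable_shift)
  finally show ?case
    using Suc by (simp add: o_def)
qed simp

lemma stationary_AE_shift_iff:
  assumes meas: "\<And>n. X n \<in> M \<rightarrow>\<^sub>M count_space UNIV"
    and stat: "stationary_int_seq M X"
    and P: "{y \<in> space int_seqs. P y} \<in> sets int_seqs"
  shows "(AE \<omega> in M. P (\<lambda>n. X (n + int m) \<omega>)) \<longleftrightarrow> (AE \<omega> in M. P (\<lambda>n. X n \<omega>))"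
proof -
  have "(AE \<omega> in M. P (\<lambda>n. X (n + int m) \<omega>))
      \<longleftrightarrow> (AE y in distr M int_seqs (\<lambda>\<omega> n. X (n + int m) \<omega>). P y)"
    using measurable_shifted_seq[OF meas] P by (intro AE_distr_iff[symmetric]) auto
  also have "\<dots> \<longleftrightarrow> (AE y in distr M int_seqs (\<lambda>\<omega> n. X n \<omega>). P y)"
    by (simp only: stationary_distr_shift[OF meas stat])
  also have "\<dots> \<longleftrightarrow> (AE \<omega> in M. P (\<lambda>n. X n \<omega>))"
    using measurable_shifted_seq[OF meas, where c = 0] P by (intro AE_distr_iff) auto
  finally show ?thesis .
qed

lemma stationary_AE_has_record:
  assumes meas: "\<And>n. X n \<in> M \<rightarrow>\<^sub>M count_space UNIV"
    and stat: "stationary_int_seq M X"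
    and record0: "AE \<omega> in M. has_record (\<lambda>n. X n \<omega>) 0"
  shows "AE \<omega> in M. has_record (\<lambda>n. X n \<omega>) k"
proof -
  have "(AE \<omega> in M. has_record (\<lambda>n. X n \<omega>) (j + int m)) \<longleftrightarrow> (AE \<omega> in M. has_record (\<lambda>n. X n \<omega>) j)"
    for j m
    using stationary_AE_shift_iff[OF meas stat sets_has_record[of j], of m]
      has_record_shift[of "\<lambda>n. X n _"] by simp
  from this[where j = 0 and m = "nat k"] this[where j = k and m = "nat (- k)"] record0 show ?thesis
    by (cases "0 \<le> k") simp_all
qed

theorem lemma3p4:
  fixes M :: "'a measure" and X :: "int \<Rightarrow> 'a \<Rightarrow> int"
  assumes "prob_space M"
    and "\<And>n. X n \<in> measurable M (count_space UNIV)"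
    and "stationary_int_seq M X"
    and "AE \<omega> in M. inf_many_ancestors (\<lambda>n. X n \<omega>) 0"
  shows "AE \<omega> in M. record_graph_connected (\<lambda>n. X n \<omega>)"
proof -
  have "AE \<omega> in M. has_record (\<lambda>n. X n \<omega>) 0"
    using assms(4) by eventually_elim
      (auto simp: inf_many_ancestors_def record_map_eq_self_iff dest: spec[of _ 1])
  then have "AE \<omega> in M. has_record (\<lambda>n. X n \<omega>) k" for k
    using stationary_AE_has_record[OF assms(2,3)] by blast
  then have "AE \<omega> in M. \<forall>k. has_record (\<lambda>n. X n \<omega>) k"
    by (simp add: AE_all_countable)
  then show ?thesis
    by eventually_elim (intro record_graph_connectedI, blast)
qed

end
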